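(* In Setup A, let $f_1<f_2<\dots<f_s$ be the distinct values of $\{f(\tau'^* ):\tau'\in\mathcal{O}\}$ and for each $1\le u\le s$ choose $\tau_u\in\mathcal{O}$ with $f(\tau_u^* )=f_u$. For $\tau\in\mathcal{O}$ and $0\le i\le l-1$ let $H_{\tau,i}:M_{p^i\tau}\to M_{p^{i+1}\tau}$ be $F$ if $f(p^i\tau^* )\ge f(\tau^* )$ and $F+V'$ if $f(p^i\tau^* )<f(\tau^* )$. Fix $1\le u\le s$ and assume that for every $1\le j\le u$, $$\dim\big(\pi_{\tau_j}\circ H_{\tau_j,l-1}\circ\cdots\circ H_{\tau_j,0}(M_{\tau_j})\big)=f_j.$$ Then $w_\tau$ is maximal for every $\tau\in\mathcal{O}$ with $f(\tau^* )\le f_u$.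
   Context: Setup A. Let $k_0=\overline{\mathbb{F}}_p$ with Frobenius $\sigma$. Let $\mathcal{O}$ be a finite set of size $l$ with a cyclic permutation $\tau'\mapsto p\tau'$ (so $\mathcal{O}=\{\tau,p\tau,\dots,p^{l-1}\tau\}$ and $p^l\tau=\tau$). Fix an integer $g\ge1$ and, for each $\tau'\in\mathcal{O}$, non-negative integers $f(\tau')$, $f(\tau'^* )$ with $f(\tau')+f(\tau'^* )=g$ (the notation $f(p^i\tau^* )$ means $f((p^i\tau)^* )$). Let $M=\bigoplus_{\tau'\in\mathcal{O}}M_{\tau'}$ where $M_{\tau'}$ has $k_0$-basis $e_{\tau',1},\dots,e_{\tau',g}$; write $M_{\tau',k}=\mathrm{Span}(e_{\tau',1},\dots,e_{\tau',k})$. For each $\tau'$ fix increasing sequences $j_{\tau',1}<\dots<j_{\tau',f(\tau')}$ and $i_{\tau',1}<\dots<i_{\tau',f(\tau'^* )}$ partitioning $\{1,\dots,g\}$, and let $w_{\tau'}\in\mathrm{Sym}_g$ be given by $w_{\tau'}(j_{\tau',k})=k$, $w_{\tau'}(i_{\tau',k})=f(\tau')+k$. Let $F:M\to M$ be the $\sigma$-semilinear map with $F(e_{\tau',j})=e_{p\tau',\,w_{\tau'}(j)-f(\tau')}$ if $w_{\tau'}(j)>f(\tau')$ and $F(e_{\tau',j})=0$ otherwise. Let $V':M\to M$ be the semilinear map with $V'(e_{\tau',j})=e_{p\tau',\,f(\tau'^* )+w_{\tau'}(j)}$ if $w_{\tau'}(j)\le f(\tau')$ and $V'(e_{\tau',j})=0$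 otherwise. Let $Q_{\tau'}=\mathrm{Span}(e_{\tau',i_{\tau',k}})$, $Q^\vee_{\tau'^*}=\mathrm{Span}(e_{\tau',j_{\tau',k}})$, and $\pi_{\tau'}:M_{\tau'}\to Q_{\tau'}$ the projection with kernel $Q^\vee_{\tau'^*}$. We say $w_{\tau'}$ is maximal if $i_{\tau',k}=k$ for all $1\le k\le f(\tau'^* )$, i.e. $w_{\tau'}(k)=f(\tau')+k$ for $k\le f(\tau'^* )$ and $w_{\tau'}(k)=k-f(\tau'^* )$ for $k>f(\tau'^* )$ (equivalently $\ker F\cap M_{\tau',f(\tau'^* )}=0$; this is the permutation of maximal length). *)

theory Defs
  imports "HOL-Library.Function_Algebras" "HOL-Algebra.Algebraic_Closure_Type"
    "Berlekamp_Zassenhaus.Finite_Field"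
begin

type_synonym 'p kbar = "'p mod_ring alg_closure"

definition frob :: "'p::prime_card kbar \<Rightarrow> 'p kbar" where
  "frob x = x ^ CARD('p)"

text \<open>Each M_tau' is modelled as coordinate vectors nat => k, supported on {1..g};
  the orbit O is {0..<l} with p*t = (t+1) mod l, so p^i tau = (tau + i) mod l.\<close>
definition scalev :: "'k::field \<Rightarrow> (nat \<Rightarrow> 'k) \<Rightarrow> (nat \<Rightarrow> 'k)" where
  "scalev c v = (\<lambda>i. c * v i)"

definition Mtau :: "nat \<Rightarrow> (nat \<Rightarrow> 'k::field) set" where
  "Mtau g = {v. \<forall>m. m \<notin> {1..g} \<longrightarrow> v m = 0}"

definition ebas :: "nat \<Rightarrow> (nat \<Rightarrow> 'k::field)" where
  "ebas m = (\<lambda>i. if i = m then 1 else 0)"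

definition semilin :: "('k::field \<Rightarrow> 'k) \<Rightarrow> nat \<Rightarrow> (nat \<Rightarrow> nat \<Rightarrow> 'k) \<Rightarrow> (nat \<Rightarrow> 'k) \<Rightarrow> (nat \<Rightarrow> 'k)" where
  "semilin \<sigma> g img v = (\<Sum>j\<in>{1..g}. scalev (\<sigma> (v j)) (img j))"

definition wperm :: "(nat \<Rightarrow> nat) \<Rightarrow> (nat \<Rightarrow> nat) \<Rightarrow> (nat \<Rightarrow> nat \<Rightarrow> nat) \<Rightarrow> (nat \<Rightarrow> nat \<Rightarrow> nat)
    \<Rightarrow> nat \<Rightarrow> nat \<Rightarrow> nat" where
  "wperm f fs jseq iseq t x =
     (if x \<in> jseq t ` {1..f t} then (THE k. k \<in> {1..f t} \<and> jseq t k = x)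
      else f t + (THE k. k \<in> {1..fs t} \<and> iseq t k = x))"

definition Fmap :: "('k::field \<Rightarrow> 'k) \<Rightarrow> nat \<Rightarrow> (nat \<Rightarrow> nat) \<Rightarrow> (nat \<Rightarrow> nat) \<Rightarrow> (nat \<Rightarrow> nat \<Rightarrow> nat)
    \<Rightarrow> (nat \<Rightarrow> nat \<Rightarrow> nat) \<Rightarrow> nat \<Rightarrow> (nat \<Rightarrow> 'k) \<Rightarrow> (nat \<Rightarrow> 'k)" where
  "Fmap \<sigma> g f fs jseq iseq t = semilin \<sigma> g (\<lambda>j.
     (let w = wperm f fs jseq iseq t j in if w > f t then ebas (w - f t) else 0))"

definition V'map :: "('k::field \<Rightarrow> 'k) \<Rightarrow> nat \<Rightarrow> (nat \<Rightarrow> nat) \<Rightarrow> (nat \<Rightarrow> nat) \<Rightarrow> (nat \<Rightarrow> nat \<Rightarrow> nat)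
    \<Rightarrow> (nat \<Rightarrow> nat \<Rightarrow> nat) \<Rightarrow> nat \<Rightarrow> (nat \<Rightarrow> 'k) \<Rightarrow> (nat \<Rightarrow> 'k)" where
  "V'map \<sigma> g f fs jseq iseq t = semilin \<sigma> g (\<lambda>j.
     (let w = wperm f fs jseq iseq t j in if w \<le> f t then ebas (fs t + w) else 0))"

definition Hmap :: "('k::field \<Rightarrow> 'k) \<Rightarrow> nat \<Rightarrow> nat \<Rightarrow> (nat \<Rightarrow> nat) \<Rightarrow> (nat \<Rightarrow> nat) \<Rightarrow> (nat \<Rightarrow> nat \<Rightarrow> nat)
    \<Rightarrow> (nat \<Rightarrow> nat \<Rightarrow> nat) \<Rightarrow> nat \<Rightarrow> nat \<Rightarrow> (nat \<Rightarrow> 'k) \<Rightarrow> (nat \<Rightarrow> 'k)" where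
  "Hmap \<sigma> l g f fs jseq iseq \<tau> i =
     (let t = (\<tau> + i) mod l in
      if fs t \<ge> fs \<tau> then Fmap \<sigma> g f fs jseq iseq t
      else (\<lambda>v. Fmap \<sigma> g f fs jseq iseq t v + V'map \<sigma> g f fs jseq iseq t v))"

primrec Hcomp :: "('k::field \<Rightarrow> 'k) \<Rightarrow> nat \<Rightarrow> nat \<Rightarrow> (nat \<Rightarrow> nat) \<Rightarrow> (nat \<Rightarrow> nat) \<Rightarrow> (nat \<Rightarrow> nat \<Rightarrow> nat)
    \<Rightarrow> (nat \<Rightarrow> nat \<Rightarrow> nat) \<Rightarrow> nat \<Rightarrow> nat \<Rightarrow> (nat \<Rightarrow> 'k) \<Rightarrow> (nat \<Rightarrow> 'k)" where
  "Hcomp \<sigma> l g f fs jseq iseq \<tau> 0 = id"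
| "Hcomp \<sigma> l g f fs jseq iseq \<tau> (Suc n) =
     Hmap \<sigma> l g f fs jseq iseq \<tau> n \<circ> Hcomp \<sigma> l g f fs jseq iseq \<tau> n"

text \<open>pi_t : M_t -> Q_t, projection with kernel Q^vee_{t^*} = span(e_{j_{t,k}}).\<close>
definition proj :: "(nat \<Rightarrow> nat) \<Rightarrow> (nat \<Rightarrow> nat \<Rightarrow> nat) \<Rightarrow> nat \<Rightarrow> (nat \<Rightarrow> 'k::field) \<Rightarrow> (nat \<Rightarrow> 'k)" where
  "proj fs iseq t v = (\<lambda>m. if m \<in> iseq t ` {1..fs t} then v m else 0)"

definition kdim :: "(nat \<Rightarrow> 'k::field) set \<Rightarrow> nat" where
  "kdim S = vector_space.dim scalev S"

definition maximal :: "(nat \<Rightarrow> nat) \<Rightarrow> (nat \<Rightarrow> nat \<Rightarrow> nat) \<Rightarrow> nat \<Rightarrow> bool" where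
  "maximal fs iseq t \<longleftrightarrow> (\<forall>k\<in>{1..fs t}. iseq t k = k)"

end

theory Submission imports Defs begin

text \<open>Induct on the value a = f(\<tau>*), so that all w_t with f(t*) < a are maximal.
  Then H_{\<tau>,0} = F maps M_\<tau> into Span(e_1, ..., e_a), and every later H_{\<tau>,i} preserves this
  span: F because i_{t,k} \<ge> k, and F + V' (used only when f(t*) < a) because for maximal w_t
  the index j_{t,k} equals f(t*) + k, which V' sends to e_{f(t*)+k}.
  If some w_t with f(t*) = a were not maximal, then i_{t,a} > a. For t \<noteq> \<tau> the map F then
  sends Span(e_1, ..., e_a) into Span(e_1, ..., e_{a-1}), and as every H sends basis vectors to
  multiples of basis vectors, the final image is spanned by fewer than a basis vectors; for
  t = \<tau> the projection \<pi>_\<tau> keeps at most a - 1 of the coordinates e_1, ..., e_a.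
  Either way the dimension hypothesis fails.\<close>

definition supported_on :: "nat set \<Rightarrow> (nat \<Rightarrow> 'k::zero) set" where
  "supported_on A = {v. \<forall>m. m \<notin> A \<longrightarrow> v m = 0}"

lemma supported_on_zero [simp]: "0 \<in> supported_on A"
  by (simp add: supported_on_def)

lemma supported_on_add:
  fixes u v :: "nat \<Rightarrow> 'k::monoid_add"
  shows "u \<in> supported_on A \<Longrightarrow> v \<in> supported_on A \<Longrightarrow> u + v \<in> supported_on (A :: nat set)"
  by (simp add: supported_on_def)

lemma supported_on_sum:
  "(\<And>j. j \<in> J \<Longrightarrow> h j \<in> supported_on A) \<Longrightarrow> sum h J \<in> supported_on A"
  by (induction J rule: infinite_finite_induct) (auto intro: supported_on_add)

lemma supported_on_mono: "u \<in> supported_on A \<Longrightarrow> A \<subseteq> B \<Longrightarrow> u \<in> supported_on B"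
  by (auto simp: supported_on_def)

lemma scalev_supported_on: "u \<in> supported_on A \<Longrightarrow> scalev c u \<in> supported_on A"
  by (simp add: supported_on_def scalev_def)

lemma ebas_supported_on: "n \<in> A \<Longrightarrow> ebas n \<in> supported_on A"
  by (simp add: supported_on_def ebas_def)

lemma Mtau_eq_supported_on: "Mtau g = supported_on {1..g}"
  by (simp add: Mtau_def supported_on_def)

lemma vector_space_scalev: "vector_space (scalev :: 'k::field \<Rightarrow> _)"
  by unfold_locales (auto simp: scalev_def fun_eq_iff algebra_simps)

lemma supported_on_subset_span:
  assumes "finite B"
  shows "(supported_on B :: (nat \<Rightarrow> 'k::field) set) \<subseteq> module.span scalev (ebas ` B)"
proof
  interpret vector_space "scalev :: 'k \<Rightarrow> _" by (rule vector_space_scalev)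
  fix v :: "nat \<Rightarrow> 'k" assume v: "v \<in> supported_on B"
  have "v = (\<Sum>m\<in>B. scalev (v m) (ebas m))"
  proof
    fix i
    have "(\<Sum>m\<in>B. scalev (v m) (ebas m)) i = (\<Sum>m\<in>B. scalev (v m) (ebas m) i)"
      by (induction B rule: infinite_finite_induct) auto
    also have "\<dots> = v i"
      using v assms by (auto simp: scalev_def ebas_def supported_on_def if_distrib cong: if_cong)
    finally show "v i = (\<Sum>m\<in>B. scalev (v m) (ebas m)) i" ..
  qed
  also have "\<dots> \<in> span (ebas ` B)"
    by (intro span_sum span_scale span_base) auto
  finally show "v \<in> span (ebas ` B)" .
qed

lemma kdim_le_card:
  assumes "finite B" "S \<subseteq> (supported_on B :: (nat \<Rightarrow> 'k::field) set)"
  shows "kdim S \<le> card B"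
proof -
  interpret vector_space "scalev :: 'k \<Rightarrow> _" by (rule vector_space_scalev)
  have "kdim S \<le> card (ebas ` B :: (nat \<Rightarrow> 'k) set)"
    unfolding kdim_def using supported_on_subset_span[OF assms(1)] assms
    by (intro dim_le_card) auto
  also have "\<dots> \<le> card B" by (rule card_image_le[OF assms(1)])
  finally show ?thesis .
qed

lemma semilin_supported_on:
  assumes "\<sigma> 0 = 0" "v \<in> supported_on A" "\<And>j. j \<in> A \<Longrightarrow> img j \<in> supported_on B"
  shows "semilin \<sigma> g img v \<in> supported_on B"
  unfolding semilin_def
proof (rule supported_on_sum)
  fix j show "scalev (\<sigma> (v j)) (img j) \<in> supported_on B"
  proof (cases "j \<in> A")
    case True then show ?thesis using assms by (intro scalev_supported_on) auto
  next
    case False then have "v j = 0" using assms(2) by (auto simp: supported_on_def)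
    then show ?thesis using assms(1) by (simp add: scalev_def zero_fun_def[symmetric])
  qed
qed

lemma frob_zero: "frob (0 :: 'p::prime_card kbar) = 0"
  unfolding frob_def using prime_gt_0_nat[OF prime_card] by simp

lemma strict_mono_on_add_le:
  assumes "strict_mono_on {m..n} (h :: nat \<Rightarrow> nat)" "m \<le> k" "k \<le> k'" "k' \<le> n"
  shows "h k + (k' - k) \<le> h k'"
  using assms(3,4)
proof (induction k')
  case (Suc k')
  show ?case
  proof (cases "k = Suc k'")
    case False
    then have "h k + (k' - k) \<le> h k'" using Suc by auto
    moreover have "h k' < h (Suc k')"
      using assms(1,2) Suc.prems False by (auto simp: strict_mono_on_def)
    ultimately show ?thesis using False Suc.prems by simp
  qed simp
qed simp

locale setup_A =
  fixes \<sigma> :: "'k::field \<Rightarrow> 'k" and l g :: nat and f fs :: "nat \<Rightarrow> nat"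
    and jseq iseq :: "nat \<Rightarrow> nat \<Rightarrow> nat"
  assumes \<sigma>_zero: "\<sigma> 0 = 0"
    and f_sum: "\<forall>t<l. f t + fs t = g"
    and j_mono: "\<forall>t<l. strict_mono_on {1..f t} (jseq t)"
    and i_mono: "\<forall>t<l. strict_mono_on {1..fs t} (iseq t)"
    and ji_cover: "\<forall>t<l. jseq t ` {1..f t} \<union> iseq t ` {1..fs t} = {1..g}"
    and ji_disj: "\<forall>t<l. jseq t ` {1..f t} \<inter> iseq t ` {1..fs t} = {}"
begin

abbreviation "w t \<equiv> wperm f fs jseq iseq t"
abbreviation "F t \<equiv> Fmap \<sigma> g f fs jseq iseq t"
abbreviation "V' t \<equiv> V'map \<sigma> g f fs jseq iseq t"
abbreviation "H \<tau> i \<equiv> Hcomp \<sigma> l g f fs jseq iseq \<tau> i"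

lemma wperm_jseq:
  assumes "t < l" "k \<in> {1..f t}"
  shows "w t (jseq t k) = k"
proof -
  have "inj_on (jseq t) {1..f t}"
    using j_mono assms(1) strict_mono_on_imp_inj_on by blast
  then have "(THE k'. k' \<in> {1..f t} \<and> jseq t k' = jseq t k) = k"
    using assms by (intro the_equality) (auto dest: inj_onD)
  then show ?thesis using assms by (simp add: wperm_def)
qed

lemma wperm_iseq:
  assumes "t < l" "k \<in> {1..fs t}"
  shows "w t (iseq t k) = f t + k"
proof -
  have "inj_on (iseq t) {1..fs t}"
    using i_mono assms(1) strict_mono_on_imp_inj_on by blast
  then have "(THE k'. k' \<in> {1..fs t} \<and> iseq t k' = iseq t k) = k"
    using assms by (intro the_equality) (auto dest: inj_onD)
  moreover have "iseq t k \<notin> jseq t ` {1..f t}" using ji_disj assms by blast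
  ultimately show ?thesis using assms by (simp add: wperm_def)
qed

lemma basis_index_cases:
  assumes "x \<in> {1..g}" "t < l"
  obtains (J) k where "k \<in> {1..f t}" "x = jseq t k" "w t x = k"
        | (I) k where "k \<in> {1..fs t}" "x = iseq t k" "w t x = f t + k"
proof -
  have "x \<in> jseq t ` {1..f t} \<or> x \<in> iseq t ` {1..fs t}" using ji_cover assms by blast
  then show ?thesis using wperm_jseq wperm_iseq assms that by blast
qed

lemma fs_le_g: "t < l \<Longrightarrow> fs t \<le> g"
  using f_sum by force

lemma index_le_iseq:
  assumes "t < l" "k \<in> {1..fs t}"
  shows "k \<le> iseq t k"
proof -
  have "1 \<le> iseq t 1" using ji_cover assms by fastforce
  then show ?thesis
    using strict_mono_on_add_le[of 1 "fs t" "iseq t" 1 k] i_mono assms by auto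
qed

lemma not_maximal_iseq_last:
  assumes "t < l" "\<not> maximal fs iseq t"
  shows "fs t < iseq t (fs t)"
proof -
  obtain k where k: "k \<in> {1..fs t}" "iseq t k \<noteq> k" using assms by (auto simp: maximal_def)
  have "k < iseq t k" using k index_le_iseq[OF assms(1) k(1)] by auto
  moreover have "iseq t k + (fs t - k) \<le> iseq t (fs t)"
    using strict_mono_on_add_le[of 1 "fs t" "iseq t" k "fs t"] i_mono assms(1) k by auto
  ultimately show ?thesis using k by auto
qed

lemma Fmap_supported_on:
  assumes "t < l" "v \<in> supported_on {1..g}"
  shows "F t v \<in> supported_on {1..fs t}"
  unfolding Fmap_def
proof (rule semilin_supported_on[of \<sigma>, OF \<sigma>_zero assms(2)])
  fix x assume "x \<in> {1..g}"
  then show "(let w = w t x in if w > f t then ebas (w - f t) else 0) \<in> supported_on {1..fs t}"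
    using assms(1) by (cases rule: basis_index_cases) (auto simp: Let_def intro: ebas_supported_on)
qed

lemma Fmap_preserves_supported_on:
  assumes "t < l" "a \<le> fs t" "v \<in> supported_on {1..a}"
  shows "F t v \<in> supported_on {1..a}"
  unfolding Fmap_def
proof (rule semilin_supported_on[of \<sigma>, OF \<sigma>_zero assms(3)])
  fix x assume x: "x \<in> {1..a}"
  then have "x \<in> {1..g}" using assms(2) fs_le_g[OF assms(1)] by auto
  then show "(let w = w t x in if w > f t then ebas (w - f t) else 0) \<in> supported_on {1..a}"
    using assms(1)
  proof (cases rule: basis_index_cases)
    case (I k)
    then have "k \<le> a" using index_le_iseq[OF assms(1) I(1)] x by auto
    then show ?thesis using I by (auto simp: Let_def intro: ebas_supported_on)
  qed (auto simp: Let_def)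
qed

lemma Fmap_plus_V'map_preserves_supported_on:
  assumes "t < l" "maximal fs iseq t" "fs t < a" "a \<le> g" "v \<in> supported_on {1..a}"
  shows "F t v + V' t v \<in> supported_on {1..a}"
proof (rule supported_on_add)
  have "v \<in> supported_on {1..g}" using assms(4,5) by (auto intro: supported_on_mono)
  from Fmap_supported_on[OF assms(1) this] show "F t v \<in> supported_on {1..a}"
    using assms(3) by (auto intro: supported_on_mono)
  show "V' t v \<in> supported_on {1..a}"
    unfolding V'map_def
  proof (rule semilin_supported_on[of \<sigma>, OF \<sigma>_zero assms(5)])
    fix x assume x: "x \<in> {1..a}"
    with assms(4) have "x \<in> {1..g}" by auto
    then show "(let w = w t x in if w \<le> f t then ebas (fs t + w) else 0) \<in> supported_on {1..a}"
      using assms(1)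
    proof (cases rule: basis_index_cases)
      case (J k)
      have "jseq t 1 \<in> {1..g}" "jseq t 1 \<notin> iseq t ` {1..fs t}"
        using ji_cover ji_disj assms(1) J(1) by fastforce+
      moreover have "iseq t ` {1..fs t} = {1..fs t}"
        using assms(2) by (auto simp: maximal_def image_iff)
      ultimately have "fs t + 1 \<le> jseq t 1" by auto
      then have "fs t + k \<le> jseq t k"
        using strict_mono_on_add_le[of 1 "f t" "jseq t" 1 k] j_mono assms(1) J by auto
      then show ?thesis using J x by (auto simp: Let_def intro: ebas_supported_on)
    qed (auto simp: Let_def)
  qed
qed

lemma Fmap_lowers_supported_on_of_not_maximal:
  assumes "t < l" "\<not> maximal fs iseq t" "v \<in> supported_on {1..fs t}"
  shows "F t v \<in> supported_on {1..fs t - 1}"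
  unfolding Fmap_def
proof (rule semilin_supported_on[of \<sigma>, OF \<sigma>_zero assms(3)])
  fix x assume x: "x \<in> {1..fs t}"
  then have "x \<in> {1..g}" using fs_le_g[OF assms(1)] by auto
  then show "(let w = w t x in if w > f t then ebas (w - f t) else 0) \<in> supported_on {1..fs t - 1}"
    using assms(1)
  proof (cases rule: basis_index_cases)
    case (I k)
    then have "k \<le> fs t" "k \<noteq> fs t" using x not_maximal_iseq_last[OF assms(1,2)] by auto
    then show ?thesis using I by (auto simp: Let_def intro: ebas_supported_on)
  qed (auto simp: Let_def)
qed

definition basis_target :: "nat \<Rightarrow> nat \<Rightarrow> nat" where
  "basis_target t x = (if w t x > f t then w t x - f t else fs t + w t x)"

lemma Hmap_supported_on_image:
  assumes "v \<in> supported_on A"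
  shows "Hmap \<sigma> l g f fs jseq iseq \<tau> i v \<in> supported_on (basis_target ((\<tau> + i) mod l) ` A)"
proof -
  define t where "t = (\<tau> + i) mod l"
  have F: "F t v \<in> supported_on (basis_target t ` A)"
    unfolding Fmap_def
    by (rule semilin_supported_on[of \<sigma>, OF \<sigma>_zero assms])
      (auto simp: Let_def basis_target_def intro: ebas_supported_on)
  have V': "V' t v \<in> supported_on (basis_target t ` A)"
    unfolding V'map_def
    by (rule semilin_supported_on[of \<sigma>, OF \<sigma>_zero assms])
      (auto simp: Let_def basis_target_def intro: ebas_supported_on)
  show ?thesis
    using F supported_on_add[OF F V'] unfolding Hmap_def t_def[symmetric] by (auto simp: Let_def)
qed

lemma Hcomp_supported_on_card:
  assumes "\<forall>v\<in>S. H \<tau> i v \<in> supported_on A" "finite A"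
  shows "\<exists>B. finite B \<and> card B \<le> card A \<and> (\<forall>v\<in>S. H \<tau> (i + k) v \<in> supported_on B)"
proof (induction k)
  case (Suc k)
  then obtain B where B: "finite B" "card B \<le> card A" "\<forall>v\<in>S. H \<tau> (i + k) v \<in> supported_on B"
    by blast
  let ?B' = "basis_target ((\<tau> + (i + k)) mod l) ` B"
  have "finite ?B'" "card ?B' \<le> card A"
    using B le_trans[OF card_image_le[OF B(1)] B(2)] by auto
  moreover have "\<forall>v\<in>S. H \<tau> (i + Suc k) v \<in> supported_on ?B'"
    using B(3) Hmap_supported_on_image by simp
  ultimately show ?case by blast
qed (use assms in \<open>auto intro!: exI[of _ A]\<close>)

lemma Hcomp_supported_on_initial:
  assumes "\<tau> < l" "\<forall>t<l. fs t < fs \<tau> \<longrightarrow> maximal fs iseq t" "1 \<le> i" "v \<in> Mtau g"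
  shows "H \<tau> i v \<in> supported_on {1..fs \<tau>}"
  using assms(3)
proof (induction i)
  case (Suc i)
  show ?case
  proof (cases "i = 0")
    case True
    then show ?thesis using Fmap_supported_on[OF assms(1)] assms
      by (simp add: Hmap_def Mtau_eq_supported_on)
  next
    case False
    define t where "t = (\<tau> + i) mod l"
    have "t < l" using assms(1) by (simp add: t_def)
    have IH: "H \<tau> i v \<in> supported_on {1..fs \<tau>}" using Suc False by simp
    show ?thesis
    proof (cases "fs \<tau> \<le> fs t")
      case True
      then show ?thesis using Fmap_preserves_supported_on[OF \<open>t < l\<close> True IH]
        by (simp add: Hmap_def t_def[symmetric] Let_def)
    next
      case False
      then show ?thesis
        using Fmap_plus_V'map_preserves_supported_on[OF \<open>t < l\<close> _ _ fs_le_g[OF assms(1)] IH] assms(2) \<open>t < l\<close>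
        by (simp add: Hmap_def t_def[symmetric] Let_def plus_fun_def)
    qed
  qed
qed simp

lemma proj_supported_on: "v \<in> supported_on A \<Longrightarrow> proj fs iseq t v \<in> supported_on A"
  by (auto simp: proj_def supported_on_def)

lemma proj_supported_on_of_not_maximal:
  assumes "t < l" "\<not> maximal fs iseq t" "v \<in> supported_on {1..fs t}"
  shows "proj fs iseq t v \<in> supported_on (iseq t ` {1..fs t - 1})"
proof -
  have "m \<in> iseq t ` {1..fs t - 1}" if m: "m \<in> {1..fs t}" "m \<in> iseq t ` {1..fs t}" for m
  proof -
    obtain k where k: "k \<in> {1..fs t}" "m = iseq t k" using m(2) by auto
    have "k \<noteq> fs t" using not_maximal_iseq_last[OF assms(1,2)] m k by auto
    then show ?thesis using k by auto
  qed
  then show ?thesis using assms(3) by (auto simp: proj_def supported_on_def)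
qed

lemma orbit_index:
  assumes "\<tau> < l" "t < l"
  obtains i where "i < l" "(\<tau> + i) mod l = t"
proof
  show "(t + l - \<tau>) mod l < l" using assms by simp
  have "(\<tau> + (t + l - \<tau>) mod l) mod l = (\<tau> + (t + l - \<tau>)) mod l" by (rule mod_add_right_eq)
  also have "\<tau> + (t + l - \<tau>) = t + l" using assms(1) by simp
  finally show "(\<tau> + (t + l - \<tau>) mod l) mod l = t" using assms(2) by simp
qed

lemma Hcomp_small_support_of_not_maximal:
  assumes "\<tau> < l" "\<forall>t<l. fs t < fs \<tau> \<longrightarrow> maximal fs iseq t"
    and "t < l" "t \<noteq> \<tau>" "fs t = fs \<tau>" "\<not> maximal fs iseq t"
  obtains B where "finite B" "card B < fs \<tau>" "\<forall>v\<in>Mtau g. H \<tau> l v \<in> supported_on B"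
proof -
  obtain i where i: "i < l" "(\<tau> + i) mod l = t" using orbit_index[OF assms(1,3)] .
  have "i \<noteq> 0" using i assms(1,4) by (cases i) auto
  have lowered: "\<forall>v\<in>Mtau g. H \<tau> (Suc i) v \<in> supported_on {1..fs \<tau> - 1}"
  proof
    fix v :: "nat \<Rightarrow> 'k" assume v: "v \<in> Mtau g"
    have "H \<tau> i v \<in> supported_on {1..fs t}"
      using Hcomp_supported_on_initial[OF assms(1,2) _ v] \<open>i \<noteq> 0\<close> assms(5) by simp
    from Fmap_lowers_supported_on_of_not_maximal[OF assms(3,6) this]
    show "H \<tau> (Suc i) v \<in> supported_on {1..fs \<tau> - 1}"
      using i(2) assms(5) by (simp add: Hmap_def Let_def)
  qed
  from Hcomp_supported_on_card[OF lowered, of "l - Suc i"] i(1) obtain B where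
    B: "finite B" "card B \<le> fs \<tau> - 1" "\<forall>v\<in>Mtau g. H \<tau> l v \<in> supported_on B"
    by auto
  moreover have "1 \<le> fs \<tau>" using assms(5,6) by (auto simp: maximal_def)
  ultimately have "card B < fs \<tau>" by simp
  then show ?thesis using that B(1,3) by blast
qed

lemma maximal_of_kdim:
  assumes "\<tau> < l" "\<forall>t<l. fs t < fs \<tau> \<longrightarrow> maximal fs iseq t"
    and dim: "kdim (proj fs iseq \<tau> ` H \<tau> l ` Mtau g) = fs \<tau>"
    and "t < l" "fs t = fs \<tau>"
  shows "maximal fs iseq t"
proof (rule ccontr)
  assume not_max: "\<not> maximal fs iseq t"
  obtain B where B: "finite B" "card B < fs \<tau>"
    "proj fs iseq \<tau> ` H \<tau> l ` Mtau g \<subseteq> supported_on B"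
  proof (cases "t = \<tau>")
    case True
    have "1 \<le> l" using assms(1) by simp
    then have "\<forall>v\<in>Mtau g. proj fs iseq \<tau> (H \<tau> l v) \<in> supported_on (iseq \<tau> ` {1..fs \<tau> - 1})"
      using proj_supported_on_of_not_maximal[OF assms(1)] not_max True
        Hcomp_supported_on_initial[OF assms(1,2)] by blast
    moreover have "card (iseq \<tau> ` {1..fs \<tau> - 1}) < fs \<tau>"
      using card_image_le[of "{1..fs \<tau> - 1}" "iseq \<tau>"] not_max True by (auto simp: maximal_def)
    ultimately show ?thesis using that by blast
  next
    case False
    obtain B where "finite B" "card B < fs \<tau>" "\<forall>v\<in>Mtau g. H \<tau> l v \<in> supported_on B"
      using Hcomp_small_support_of_not_maximal[OF assms(1,2,4) False assms(5) not_max] .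
    then show ?thesis using that[of B] by (auto intro: proj_supported_on)
  qed
  then have "kdim (proj fs iseq \<tau> ` H \<tau> l ` Mtau g) \<le> card B" by (intro kdim_le_card) auto
  then show False using dim B by simp
qed

end

lemma sorted_list_of_set_levels_induct:
  fixes h :: "'a \<Rightarrow> 'b::linorder" and A :: "'a set"
  defines "L \<equiv> sorted_list_of_set (h ` A)"
  assumes "finite A" "u < length L"
    and step: "\<And>i a. i \<le> u \<Longrightarrow> \<forall>b\<in>A. h b < L ! i \<longrightarrow> P b \<Longrightarrow> a \<in> A \<Longrightarrow> h a = L ! i \<Longrightarrow> P a"
  shows "a \<in> A \<Longrightarrow> h a \<le> L ! u \<Longrightarrow> P a"
proof -
  have set_L: "set L = h ` A" using assms(2) by (simp add: L_def)
  have strict: "sorted_wrt (<) L" by (simp add: L_def strict_sorted_list_of_set)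
  have nth_less_iff: "L ! i < L ! j \<longleftrightarrow> i < j" if "i < length L" "j < length L" for i j
    using that sorted_wrt_nth_less[OF strict] by (metis linorder_neqE_nat order.asym order.irrefl)
  have index: "\<exists>i<length L. h a = L ! i" if "a \<in> A" for a
    using that set_L by (metis image_eqI in_set_conv_nth)
  have level: "\<forall>a\<in>A. h a = L ! i \<longrightarrow> P a" if "i \<le> u" for i
    using that
  proof (induction i rule: less_induct)
    case (less i)
    have "P b" if "b \<in> A" "h b < L ! i" for b
    proof -
      obtain k where "k < length L" "h b = L ! k" using index[OF \<open>b \<in> A\<close>] by blast
      then show ?thesis using less that assms(3) nth_less_iff[of k i] by auto
    qed
    then show ?case using step less.prems by blast
  qed
  assume "a \<in> A" "h a \<le> L ! u"
  then obtain k where "k < length L" "h a = L ! k" using index by blast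
  then show "P a" using level[of k] \<open>a \<in> A\<close> \<open>h a \<le> L ! u\<close> assms(3) nth_less_iff[of u k] by force
qed

theorem theorem4p6:
  fixes l g u :: nat and f fs :: "nat \<Rightarrow> nat" and jseq iseq :: "nat \<Rightarrow> nat \<Rightarrow> nat"
    and tauu :: "nat \<Rightarrow> nat"
    and \<sigma> :: "'p::prime_card kbar \<Rightarrow> 'p kbar"
  defines "\<sigma> \<equiv> frob"
  assumes l_pos: "l \<ge> 1" and g_pos: "g \<ge> 1"
    and f_sum: "\<forall>t<l. f t + fs t = g"
    and j_mono: "\<forall>t<l. strict_mono_on {1..f t} (jseq t)"
    and i_mono: "\<forall>t<l. strict_mono_on {1..fs t} (iseq t)"
    and ji_cover: "\<forall>t<l. jseq t ` {1..f t} \<union> iseq t ` {1..fs t} = {1..g}"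
    and ji_disj: "\<forall>t<l. jseq t ` {1..f t} \<inter> iseq t ` {1..fs t} = {}"
    and tauu_def: "\<forall>v\<in>{1..length (sorted_list_of_set (fs ` {0..<l}))}.
          tauu v < l \<and> fs (tauu v) = sorted_list_of_set (fs ` {0..<l}) ! (v - 1)"
    and u_range: "1 \<le> u" "u \<le> length (sorted_list_of_set (fs ` {0..<l}))"
    and dim_hyp: "\<forall>j\<in>{1..u}.
          kdim (proj fs iseq (tauu j) ` Hcomp \<sigma> l g f fs jseq iseq (tauu j) l ` Mtau g)
            = sorted_list_of_set (fs ` {0..<l}) ! (j - 1)"
  shows "\<forall>t<l. fs t \<le> sorted_list_of_set (fs ` {0..<l}) ! (u - 1) \<longrightarrow> maximal fs iseq t"
proof (intro allI impI)
  let ?L = "sorted_list_of_set (fs ` {0..<l})"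
  interpret setup_A \<sigma> l g f fs jseq iseq
    by unfold_locales (use f_sum j_mono i_mono ji_cover ji_disj in \<open>auto simp: \<sigma>_def frob_zero\<close>)
  fix t assume t: "t < l" "fs t \<le> ?L ! (u - 1)"
  show "maximal fs iseq t"
  proof (rule sorted_list_of_set_levels_induct[where A = "{0..<l}" and h = fs and u = "u - 1"
        and P = "maximal fs iseq" and a = t])
    show "finite {0..<l}" "u - 1 < length ?L" "t \<in> {0..<l}" "fs t \<le> ?L ! (u - 1)"
      using t u_range by auto
    fix i s
    assume i: "i \<le> u - 1" and below: "\<forall>b\<in>{0..<l}. fs b < ?L ! i \<longrightarrow> maximal fs iseq b"
      and s: "s \<in> {0..<l}" "fs s = ?L ! i"
    define \<tau> where "\<tau> = tauu (Suc i)"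
    have \<tau>: "\<tau> < l" "fs \<tau> = ?L ! i"
      using tauu_def i u_range by (auto simp: \<tau>_def)
    have "kdim (proj fs iseq \<tau> ` H \<tau> l ` Mtau g) = fs \<tau>"
      using dim_hyp i u_range \<tau>(2) by (auto simp: \<tau>_def)
    moreover have "\<forall>b<l. fs b < fs \<tau> \<longrightarrow> maximal fs iseq b"
      using below \<tau>(2) by simp
    ultimately show "maximal fs iseq s"
      using maximal_of_kdim[OF \<tau>(1)] s \<tau>(2) by simp
  qed
qed

end
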